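(* Let $H$, $G$, the Coxeter generators $s_1,\dots,s_6,s_{3'}$ and the cosets $\pm v(i,j)\in G\backslash H$ be as in the context, with $H$ acting on $G\backslash H$ by right multiplication. (a) For $0\le k\le 5$ let $\rho_k$ denote the transposition $(k+1,k+2)$ of $\{0,1,\dots,7\}$. Then for all $0\le i<j\le 7$ and either choice of sign, $s_{6-k}(\pm v(i,j))=\pm v(\rho_k(i),\rho_k(j))$ (same sign on both sides). (b) Let $K_0=\{0,1,2,3\}$ and $K_1=\{4,5,6,7\}$. Then for $0\le i<j\le 7$, $$s_{3'}(\pm v(i,j))=\begin{cases}\mp v(k,l) & \text{if } \{i,j,k,l\}=K_p \text{ for some } p\in\{0,1\},\\ \pm v(i,j) & \text{otherwise.}\end{cases}$$
   Context: Let $W=\{(a,b,c,d,e,f,g,h)^T\in\mathbb{C}^8: 2+3a=b+c+d+e+f+g+h\}$. A transposition $(ij)\in S_8$ is identified with the $8\times8$ permutation matrix swapping the $i$th and $j$th coordinates. Let $X\in GL(8,\mathbb{C})$ be the matrix whose rows are $(\tfrac12,\tfrac12,-\tfrac12,-\tfrac12,-\tfrac12,\tfrac12,\tfrac12,\tfrac12)$, $e_2$, $(-\tfrac12,\tfrac12,\tfrac12,-\tfrac12,-\tfrac12,\tfrac12,\tfrac12,\tfrac12)$, $(-\tfrac12,\tfrac12,-\tfrac12,\tfrac12,-\tfrac12,\tfrac12,\tfrac12,\tfrac12)$, $(-\tfrac12,\tfrac12,-\tfrac12,-\tfrac12,\tfrac12,\tfrac12,\tfrac12,\tfrac12)$,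 $e_6,e_7,e_8$ (so for $\vec w\in W$, $X\vec w=(1+2a-c-d-e,b,1+a-d-e,1+a-c-e,1+a-c-d,f,g,h)^T$), and let $Y$ be the matrix with rows $(-1,2,0,0,0,0,0,0)$, $(-1,1,1,0,0,0,0,0)$, $(0,1,0,0,0,0,0,0)$, and, for $r=4,\dots,8$, the row $-e_1+e_2+e_r$ (so $Y\vec w=(2b-a,b+c-a,b,b+d-a,b+e-a,b+f-a,b+g-a,b+h-a)^T$). Let $H=\langle(23),(34),(45),(56),(67),(78),X,Y\rangle\subset GL(8,\mathbb{C})$; $H\cong W(E_7)$ with Coxeter generators $s_1=Y(23)$, $s_2=(34)$, $s_3=(45)$, $s_4=(56)$, $s_5=(67)$, $s_6=(78)$, $s_{3'}=X$. Let $G=\langle s_2,s_3,s_4,s_5,s_6,s_{3'}\rangle$ ($\cong W(E_6)$, index 56 in $H$). For $\vec w\in W$ put $x_0=b,x_1=h,x_2=g,x_3=f,x_4=e,x_5=d,x_6=c,x_7=a$. For $\alpha,\beta\in H$, the second entries of $\alpha\vec w$ and $\beta\vec w$ (as affine functions of $\vec w\in W$) agree iff $G\alpha=G\beta$, and each such second entry is $x_i+x_j-x_7$ or $1+x_7-x_i-x_j$ for some $0\le i<j\le 7$. Write $v(i,j)$ for the right coset of $G$ whose elements $\alpha$ give second entry $x_i+x_j-x_7$, and $-v(i,j)$ for the coset giving $1+x_7-x_i-x_j$; these are the 56 cosets, and $\pm v(j,i)$ means $\pm v(i,j)$. For an involution $s\in H$ and a coset $G\beta$, $s(G\beta):=G\beta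 s$. *)

theory Defs
  imports "HOL-Analysis.Analysis"
begin

text \<open>Coordinates 1..8 of complex 8-vectors / 8x8 matrices (index type 8 = {0..7}).\<close>

type_synonym vec8 = "complex ^ 8"
type_synonym mat8 = "complex ^ 8 ^ 8"

definition idx :: "8 \<Rightarrow> nat" where
  "idx r = nat (Rep_bit0 r) + 1"

definition cidx :: "nat \<Rightarrow> 8" where
  "cidx k = Abs_bit0 (int k - 1)"

definition ent :: "vec8 \<Rightarrow> nat \<Rightarrow> complex" where
  "ent w k = w $ cidx k"

definition mk :: "(nat \<Rightarrow> nat \<Rightarrow> complex) \<Rightarrow> mat8" where
  "mk f = (\<chi> r s. f (idx r) (idx s))"

definition Wset :: "vec8 set" where
  "Wset = {w. 2 + 3 * ent w 1 = ent w 2 + ent w 3 + ent w 4 + ent w 5 + ent w 6 + ent w 7 + ent w 8}"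

definition tr :: "nat \<Rightarrow> nat \<Rightarrow> mat8" where
  "tr i j = mk (\<lambda>r s. if s = (if r = i then j else if r = j then i else r) then 1 else 0)"

definition Xm :: mat8 where
  "Xm = mk (\<lambda>r s.
     if r = 1 then (if s \<in> {3,4,5} then -1/2 else 1/2)
     else if r = 3 then (if s \<in> {1,4,5} then -1/2 else 1/2)
     else if r = 4 then (if s \<in> {1,3,5} then -1/2 else 1/2)
     else if r = 5 then (if s \<in> {1,3,4} then -1/2 else 1/2)
     else (if s = r then 1 else 0))"

definition Ym :: mat8 where
  "Ym = mk (\<lambda>r s.
     if r = 1 then (if s = 1 then -1 else if s = 2 then 2 else 0)
     else if r = 2 then (if s = 1 then -1 else if s = 2 then 1 else if s = 3 then 1 else 0)
     else if r = 3 then (if s = 2 then 1 else 0)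
     else (if s = 1 then -1 else if s = 2 then 1 else if s = r then 1 else 0))"

inductive_set gen_grp :: "mat8 set \<Rightarrow> mat8 set" for S where
  one: "mat 1 \<in> gen_grp S"
| mul: "a \<in> gen_grp S \<Longrightarrow> s \<in> S \<Longrightarrow> a ** s \<in> gen_grp S"
| mulinv: "a \<in> gen_grp S \<Longrightarrow> s \<in> S \<Longrightarrow> a ** matrix_inv s \<in> gen_grp S"

definition Hgrp :: "mat8 set" where
  "Hgrp = gen_grp {tr 2 3, tr 3 4, tr 4 5, tr 5 6, tr 6 7, tr 7 8, Xm, Ym}"

definition sgen :: "nat \<Rightarrow> mat8" where
  "sgen k = (if k = 1 then Ym ** tr 2 3 else tr (k+1) (k+2))"

definition s3' :: mat8 where "s3' = Xm"

definition Ggrp :: "mat8 set" where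
  "Ggrp = gen_grp {sgen 2, sgen 3, sgen 4, sgen 5, sgen 6, s3'}"

text \<open>x_0 = b, x_1 = h, x_2 = g, x_3 = f, x_4 = e, x_5 = d, x_6 = c, x_7 = a\<close>
definition xc :: "nat \<Rightarrow> vec8 \<Rightarrow> complex" where
  "xc i w = ent w (if i = 0 then 2 else if i = 7 then 1 else 9 - i)"

text \<open>The coset +v(i,j) (sign True) resp. -v(i,j) (sign False): all elements of H
  whose second entry of alpha w, as a function of w in W, is x_i+x_j-x_7 resp. 1+x_7-x_i-x_j.\<close>
definition vc :: "bool \<Rightarrow> nat \<Rightarrow> nat \<Rightarrow> mat8 set" where
  "vc sg i j = {\<alpha> \<in> Hgrp. \<forall>w \<in> Wset.
      ent (\<alpha> *v w) 2 = (if sg then xc i w + xc j w - xc 7 w else 1 + xc 7 w - xc i w - xc j w)}"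

text \<open>action of an involution s on a coset: s(G beta) = G beta s\<close>
definition act :: "mat8 \<Rightarrow> mat8 set \<Rightarrow> mat8 set" where
  "act s C = (\<lambda>\<alpha>. \<alpha> ** s) ` C"

definition rho :: "nat \<Rightarrow> nat \<Rightarrow> nat" where
  "rho k i = (if i = k + 1 then k + 2 else if i = k + 2 then k + 1 else i)"

definition Kset :: "nat \<Rightarrow> nat set" where
  "Kset p = (if p = 0 then {0,1,2,3} else {4,5,6,7})"

end

theory Submission
  imports Defs
begin

(*
  Each Coxeter generator s is an involution that preserves H under right multiplication and
  maps W to itself. Hence right multiplication by s sends the coset on which the second entry
  is the affine function F to the coset on which it is F o s, and everything reduces to the
  action of s on the coordinates x_0, ..., x_7. The generators s_2, ..., s_6 permute them by
  rho_k; s_1 maps x_m to x_m + c_m (x_6 - x_7) with c = (1,1,1,1,1,1,0,2), which again realises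
  rho_5 on the functions x_i + x_j - x_7. On W, s_3' adds delta = 1 + x_7 - x_4 - x_5 - x_6 to the
  coordinates indexed by K_1; this fixes x_i + x_j - x_7 when exactly one of i, j lies in K_1,
  and for a pair inside a block the equation of W, in the form
  sum_{K_0} x + sum_{K_1} x = 2 + 4 x_7, turns it into 1 + x_7 - x_k - x_l for the
  complementary pair.
*)

lemma idx_cidx: "k \<in> {1..8} \<Longrightarrow> idx (cidx k) = k"
  unfolding idx_def cidx_def by (subst Abs_bit0_inverse) auto

lemma cidx_idx: "cidx (idx r) = r"
  using Rep_bit0[of r] unfolding idx_def cidx_def by (simp add: Rep_bit0_inverse)

lemma inj_idx: "inj idx"
  by (metis cidx_idx injI)

lemma idx_range: "idx r \<in> {1..8}"
  using Rep_bit0[of r] unfolding idx_def by auto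

lemma idx_image: "range idx = {1..8}"
proof
  show "range idx \<subseteq> {1..8}"
    using idx_range by auto
  show "{1..8} \<subseteq> range idx"
    by (metis idx_cidx rangeI subsetI)
qed

lemma ent_mk_mult:
  assumes "r \<in> {1..8}"
  shows "ent (mk f *v w) r = (\<Sum>s\<in>{1..8}. f r s * ent w s)"
proof -
  have "ent (mk f *v w) r = (\<Sum>j\<in>UNIV. f r (idx j) * ent w (idx j))"
    using assms by (simp add: ent_def mk_def matrix_vector_mult_def idx_cidx cidx_idx)
  also have "\<dots> = (\<Sum>s\<in>range idx. f r s * ent w s)"
    by (simp add: sum.reindex inj_idx)
  finally show ?thesis by (simp add: idx_image)
qed

lemma ent_mk_mult_expand:
  "r \<in> {1..8} \<Longrightarrow> ent (mk f *v w) r = f r 1 * ent w 1 + f r 2 * ent w 2 + f r 3 * ent w 3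
     + f r 4 * ent w 4 + f r 5 * ent w 5 + f r 6 * ent w 6 + f r 7 * ent w 7 + f r 8 * ent w 8"
  by (simp add: ent_mk_mult numeral_eq_Suc add.assoc)

lemma vec8_eqI:
  assumes "\<And>r. r \<in> {1..8} \<Longrightarrow> ent v r = ent u r"
  shows "v = u"
  unfolding vec_eq_iff
  using assms idx_range by (metis ent_def cidx_idx)

lemma mat8_eqI:
  assumes "\<And>w r. r \<in> {1..8} \<Longrightarrow> ent (A *v w) r = ent (B *v w) r"
  shows "A = (B :: mat8)"
  using assms vec8_eqI matrix_eq by metis

lemma nat_le_7_cases:
  "(n::nat) \<le> 7 \<Longrightarrow> n = 0 \<or> n = 1 \<or> n = 2 \<or> n = 3 \<or> n = 4 \<or> n = 5 \<or> n = 6 \<or> n = 7"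
  by auto

lemma index8_cases:
  "(r::nat) \<in> {1..8} \<Longrightarrow> r = 1 \<or> r = 2 \<or> r = 3 \<or> r = 4 \<or> r = 5 \<or> r = 6 \<or> r = 7 \<or> r = 8"
  by auto

lemma ent_tr_mult:
  assumes "r \<in> {1..8}" "a \<in> {1..8}" "b \<in> {1..8}"
  shows "ent (tr a b *v w) r = ent w (if r = a then b else if r = b then a else r)"
proof -
  have if_one_mult: "(if P then 1 else 0) * x = (if P then x else 0)" for P and x :: complex
    by simp
  show ?thesis
    using assms unfolding tr_def by (simp add: ent_mk_mult if_one_mult)
qed

lemma ent_Xm_mult:
  fixes w :: vec8
  defines "a \<equiv> ent w 1" and "b \<equiv> ent w 2" and "c \<equiv> ent w 3" and "d \<equiv> ent w 4"
    and "e \<equiv> ent w 5" and "f \<equiv> ent w 6" and "g \<equiv> ent w 7" and "h \<equiv> ent w 8"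
  shows "ent (Xm *v w) 1 = (a+b-c-d-e+f+g+h)/2" "ent (Xm *v w) 2 = b"
    "ent (Xm *v w) 3 = (-a+b+c-d-e+f+g+h)/2" "ent (Xm *v w) 4 = (-a+b-c+d-e+f+g+h)/2"
    "ent (Xm *v w) 5 = (-a+b-c-d+e+f+g+h)/2" "ent (Xm *v w) 6 = f"
    "ent (Xm *v w) 7 = g" "ent (Xm *v w) 8 = h"
  unfolding assms Xm_def by (simp_all add: ent_mk_mult_expand field_simps del: One_nat_def)

lemma ent_sgen1_mult:
  fixes w :: vec8
  defines "a \<equiv> ent w 1" and "b \<equiv> ent w 2" and "c \<equiv> ent w 3" and "d \<equiv> ent w 4"
    and "e \<equiv> ent w 5" and "f \<equiv> ent w 6" and "g \<equiv> ent w 7" and "h \<equiv> ent w 8"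
  shows "ent (sgen 1 *v w) 1 = 2*c - a" "ent (sgen 1 *v w) 2 = b + c - a"
    "ent (sgen 1 *v w) 3 = c" "ent (sgen 1 *v w) 4 = c + d - a"
    "ent (sgen 1 *v w) 5 = c + e - a" "ent (sgen 1 *v w) 6 = c + f - a"
    "ent (sgen 1 *v w) 7 = c + g - a" "ent (sgen 1 *v w) 8 = c + h - a"
  unfolding assms sgen_def Ym_def
  by (simp_all add: matrix_vector_mul_assoc[symmetric] ent_mk_mult_expand ent_tr_mult
      del: One_nat_def)

lemma right_mult_image_level_set:
  fixes s :: "'a::comm_semiring_1^'n^'n"
  assumes involution: "s ** s = mat 1"
    and closed: "\<And>\<alpha>. \<alpha> \<in> G \<Longrightarrow> \<alpha> ** s \<in> G"
    and invariant: "\<And>w. w \<in> V \<Longrightarrow> s *v w \<in> V"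
  shows "(\<lambda>\<alpha>. \<alpha> ** s) ` {\<alpha> \<in> G. \<forall>w\<in>V. \<phi> (\<alpha> *v w) = F w}
       = {\<beta> \<in> G. \<forall>w\<in>V. \<phi> (\<beta> *v w) = F (s *v w)}"
proof (intro equalityI subsetI)
  fix \<beta> assume "\<beta> \<in> (\<lambda>\<alpha>. \<alpha> ** s) ` {\<alpha> \<in> G. \<forall>w\<in>V. \<phi> (\<alpha> *v w) = F w}"
  then obtain \<alpha> where "\<alpha> \<in> G" "\<forall>w\<in>V. \<phi> (\<alpha> *v w) = F w" and "\<beta> = \<alpha> ** s"
    by blast
  then show "\<beta> \<in> {\<beta> \<in> G. \<forall>w\<in>V. \<phi> (\<beta> *v w) = F (s *v w)}"
    using closed invariant by (simp add: matrix_vector_mul_assoc[symmetric])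
next
  fix \<beta> assume \<beta>: "\<beta> \<in> {\<beta> \<in> G. \<forall>w\<in>V. \<phi> (\<beta> *v w) = F (s *v w)}"
  have "s *v (s *v w) = w" for w
    by (simp add: matrix_vector_mul_assoc involution)
  then have "\<phi> ((\<beta> ** s) *v w) = F w" if "w \<in> V" for w
    using \<beta> invariant[OF that] by (simp add: matrix_vector_mul_assoc[symmetric])
  then have "\<beta> ** s \<in> {\<alpha> \<in> G. \<forall>w\<in>V. \<phi> (\<alpha> *v w) = F w}"
    using \<beta> closed by blast
  moreover have "\<beta> = (\<beta> ** s) ** s"
    by (simp add: matrix_mul_assoc[symmetric] involution)
  ultimately show "\<beta> \<in> (\<lambda>\<alpha>. \<alpha> ** s) ` {\<alpha> \<in> G. \<forall>w\<in>V. \<phi> (\<alpha> *v w) = F w}"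
    by (rule rev_image_eqI)
qed

definition coset_involution :: "mat8 \<Rightarrow> bool" where
  "coset_involution s \<longleftrightarrow>
     s ** s = mat 1 \<and> (\<forall>\<alpha>\<in>Hgrp. \<alpha> ** s \<in> Hgrp) \<and> (\<forall>w\<in>Wset. s *v w \<in> Wset)"

definition pair_coord :: "nat \<Rightarrow> nat \<Rightarrow> vec8 \<Rightarrow> complex" where
  "pair_coord i j w = xc i w + xc j w - xc 7 w"

definition signed_pair_coord :: "bool \<Rightarrow> nat \<Rightarrow> nat \<Rightarrow> vec8 \<Rightarrow> complex" where
  "signed_pair_coord sg i j w = (if sg then pair_coord i j w else 1 - pair_coord i j w)"

lemma vc_eq_level_set:
  "vc sg i j = {\<alpha> \<in> Hgrp. \<forall>w\<in>Wset. ent (\<alpha> *v w) 2 = signed_pair_coord sg i j w}"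
  unfolding vc_def signed_pair_coord_def pair_coord_def by (simp add: algebra_simps)

lemma act_vc_eqI:
  assumes "coset_involution s"
    and "\<And>w. w \<in> Wset \<Longrightarrow> signed_pair_coord sg i j (s *v w) = signed_pair_coord sg' i' j' w"
  shows "act s (vc sg i j) = vc sg' i' j'"
proof -
  have "act s (vc sg i j)
      = {\<beta> \<in> Hgrp. \<forall>w\<in>Wset. ent (\<beta> *v w) 2 = signed_pair_coord sg i j (s *v w)}"
    unfolding act_def vc_eq_level_set
    using assms(1) by (intro right_mult_image_level_set) (auto simp: coset_involution_def)
  also have "\<dots> = vc sg' i' j'"
    using assms(2) by (auto simp: vc_eq_level_set)
  finally show ?thesis .
qed

lemma right_mult_generator_in_Hgrp:
  "s \<in> {tr 2 3, tr 3 4, tr 4 5, tr 5 6, tr 6 7, tr 7 8, Xm, Ym} \<Longrightarrow> \<alpha> \<in> Hgrp \<Longrightarrow> \<alpha> ** s \<in> Hgrp"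
  unfolding Hgrp_def by (rule gen_grp.mul)

lemma Wset_ent_2_eq:
  "w \<in> Wset \<Longrightarrow>
     ent w 2 = 2 + 3 * ent w 1 - ent w 3 - ent w 4 - ent w 5 - ent w 6 - ent w 7 - ent w 8"
  unfolding Wset_def by (simp add: algebra_simps)

lemma coset_involution_sgen:
  assumes "k \<in> {2..6}"
  shows "coset_involution (sgen k)"
proof -
  have k: "k = 2 \<or> k = 3 \<or> k = 4 \<or> k = 5 \<or> k = 6" and s: "sgen k = tr (k+1) (k+2)"
    using assms by (auto simp: sgen_def)
  have "\<forall>\<alpha>\<in>Hgrp. \<alpha> ** tr (k+1) (k+2) \<in> Hgrp"
    using k right_mult_generator_in_Hgrp by auto
  moreover have "tr (k+1) (k+2) ** tr (k+1) (k+2) = mat 1"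
    by (rule mat8_eqI) (use assms in \<open>auto simp: ent_tr_mult matrix_vector_mul_assoc[symmetric]\<close>)
  moreover have "\<forall>w\<in>Wset. tr (k+1) (k+2) *v w \<in> Wset"
    using k by (elim disjE) (auto simp: Wset_def ent_tr_mult algebra_simps numeral_eq_Suc)
  ultimately show ?thesis
    unfolding coset_involution_def s by blast
qed

lemma coset_involution_sgen1: "coset_involution (sgen 1)"
proof -
  have "\<alpha> ** sgen 1 \<in> Hgrp" if "\<alpha> \<in> Hgrp" for \<alpha>
  proof -
    have "(\<alpha> ** Ym) ** tr 2 3 \<in> Hgrp"
      using that right_mult_generator_in_Hgrp by simp
    then show ?thesis
      by (simp add: sgen_def matrix_mul_assoc)
  qed
  moreover have "sgen 1 ** sgen 1 = mat 1"
  proof (rule mat8_eqI)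
    fix w r assume "r \<in> {1..(8::nat)}"
    then show "ent ((sgen 1 ** sgen 1) *v w) r = ent (mat 1 *v w) r"
      using ent_sgen1_mult[of "sgen 1 *v w"] ent_sgen1_mult[of w]
      by (elim index8_cases[elim_format] disjE)
        (simp_all add: matrix_vector_mul_assoc[symmetric] algebra_simps del: One_nat_def)
  qed
  moreover have "sgen 1 *v w \<in> Wset" if "w \<in> Wset" for w
    using that unfolding Wset_def
    by (simp only: mem_Collect_eq ent_sgen1_mult) (simp add: algebra_simps del: One_nat_def)
  ultimately show ?thesis
    unfolding coset_involution_def by blast
qed

lemma coset_involution_s3': "coset_involution s3'"
proof -
  have "\<forall>\<alpha>\<in>Hgrp. \<alpha> ** Xm \<in> Hgrp"
    using right_mult_generator_in_Hgrp by blast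
  moreover have "Xm ** Xm = mat 1"
  proof (rule mat8_eqI)
    fix w r assume "r \<in> {1..(8::nat)}"
    then show "ent ((Xm ** Xm) *v w) r = ent (mat 1 *v w) r"
      using ent_Xm_mult[of "Xm *v w"] ent_Xm_mult[of w]
      by (elim index8_cases[elim_format] disjE)
        (simp_all add: matrix_vector_mul_assoc[symmetric] field_simps del: One_nat_def)
  qed
  moreover have "Xm *v w \<in> Wset" if "w \<in> Wset" for w
    unfolding Wset_def
    by (simp only: mem_Collect_eq ent_Xm_mult Wset_ent_2_eq[OF that])
      (simp add: field_simps del: One_nat_def)
  ultimately show ?thesis
    unfolding coset_involution_def s3'_def by blast
qed

lemma xc_sgen_mult:
  assumes "k \<le> 4" "m \<le> 7"
  shows "xc m (sgen (6 - k) *v w) = xc (rho k m) w"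
  using nat_le_7_cases[OF assms(2)] assms(1)
  by (elim disjE)
    (auto simp: sgen_def ent_tr_mult xc_def rho_def numeral_eq_Suc
      elim!: nat_le_7_cases[elim_format, of k])

lemma xc_sgen1_mult:
  assumes "m \<le> 7"
  shows "xc m (sgen 1 *v w)
    = xc m w + (if m = 6 then 0 else if m = 7 then 2 else 1) * (xc 6 w - xc 7 w)"
  using nat_le_7_cases[OF assms]
  by (elim disjE) (simp_all add: xc_def ent_sgen1_mult algebra_simps del: One_nat_def)

lemma xc_s3'_mult:
  assumes "w \<in> Wset" "m \<le> 7"
  shows "xc m (s3' *v w)
    = xc m w + (if m \<in> Kset 1 then 1 + xc 7 w - xc 4 w - xc 5 w - xc 6 w else 0)"
  using nat_le_7_cases[OF assms(2)]
  by (elim disjE)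
    (simp_all add: s3'_def Kset_def xc_def ent_Xm_mult Wset_ent_2_eq[OF assms(1)] field_simps
      del: One_nat_def)

lemma Wset_xc_sum:
  "w \<in> Wset \<Longrightarrow> (\<Sum>m\<in>Kset 0. xc m w) + (\<Sum>m\<in>Kset 1. xc m w) = 2 + 4 * xc 7 w"
  by (simp add: Kset_def xc_def Wset_def algebra_simps)

lemma pair_coord_sgen:
  assumes "k \<le> 5" "i \<le> 7" "j \<le> 7"
  shows "pair_coord i j (sgen (6 - k) *v w) = pair_coord (rho k i) (rho k j) w"
proof (cases "k \<le> 4")
  case True
  then show ?thesis
    using assms by (simp add: pair_coord_def xc_sgen_mult rho_def)
next
  case False
  then have "k = 5" using assms(1) by simp
  moreover have "pair_coord i j (sgen 1 *v w) = pair_coord (rho 5 i) (rho 5 j) w"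
    using assms
    by (auto simp: pair_coord_def xc_sgen1_mult rho_def algebra_simps simp del: One_nat_def)
  ultimately show ?thesis by simp
qed

lemma act_sgen_vc:
  assumes "k \<le> 5" "i \<le> 7" "j \<le> 7"
  shows "act (sgen (6 - k)) (vc sg i j) = vc sg (rho k i) (rho k j)"
proof (rule act_vc_eqI)
  show "coset_involution (sgen (6 - k))"
    using assms(1) coset_involution_sgen[of "6 - k"] coset_involution_sgen1
    by (cases "k = 5") auto
  show "signed_pair_coord sg i j (sgen (6 - k) *v w)
      = signed_pair_coord sg (rho k i) (rho k j) w" for w
    using assms by (simp add: signed_pair_coord_def pair_coord_sgen)
qed

lemma sum_eq_four_elements:
  fixes f :: "'a \<Rightarrow> 'b::comm_monoid_add"
  assumes "{i, j, k, l} = A" "card A = 4"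
  shows "sum f A = f i + f j + f k + f l"
proof -
  have "distinct [i, j, k, l]"
    using assms by (auto simp: card_insert_if split: if_splits)
  then show ?thesis
    using assms(1)[symmetric] by (simp add: add.assoc)
qed

lemma card_pair_completion:
  assumes "card A = 4" "i \<in> A" "j \<in> A" "i \<noteq> j"
  shows "\<exists>k l. {i, j, k, l} = A"
proof -
  have "card (A - {i, j}) = 2"
    using assms by (simp add: card_Diff_subset card_ge_0_finite)
  then obtain k l where "A - {i, j} = {k, l}"
    by (meson card_2_iff)
  then have "{i, j, k, l} = A"
    using assms(2,3) by blast
  then show ?thesis by blast
qed

lemma card_Kset: "p \<in> {0, 1} \<Longrightarrow> card (Kset p) = 4"
  by (auto simp: Kset_def)

lemma Kset_0_iff: "m \<le> 7 \<Longrightarrow> m \<in> Kset 0 \<longleftrightarrow> m \<notin> Kset 1"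
  by (auto simp: Kset_def)

lemma pair_coord_s3'_same_block:
  assumes w: "w \<in> Wset" and p: "p \<in> {0, 1}" and ijkl: "{i, j, k, l} = Kset p"
  shows "pair_coord i j (s3' *v w) = 1 - pair_coord k l w"
proof -
  define \<delta> where "\<delta> = 1 + xc 7 w - xc 4 w - xc 5 w - xc 6 w"
  have block: "i \<in> Kset p" "j \<in> Kset p"
    using ijkl by blast+
  then have "i \<le> 7" "j \<le> 7"
    by (auto simp: Kset_def split: if_splits)
  have four: "xc i w + xc j w + xc k w + xc l w = (\<Sum>m\<in>Kset p. xc m w)"
    by (simp add: sum_eq_four_elements[OF ijkl card_Kset[OF p]])
  have sum1: "(\<Sum>m\<in>Kset 1. xc m w) = xc 4 w + xc 5 w + xc 6 w + xc 7 w"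
    by (simp add: Kset_def)
  consider "p = 0" "i \<notin> Kset 1" "j \<notin> Kset 1" | "p = 1" "i \<in> Kset 1" "j \<in> Kset 1"
    using p block by (auto simp: Kset_def)
  then show ?thesis
  proof cases
    case 1
    then have "pair_coord i j (s3' *v w) = xc i w + xc j w - xc 7 w - \<delta>"
      using block \<open>i \<le> 7\<close> \<open>j \<le> 7\<close>
      by (simp add: pair_coord_def xc_s3'_mult[OF w] \<delta>_def Kset_def)
    then show ?thesis
      using four[unfolded \<open>p = 0\<close>] sum1 Wset_xc_sum[OF w]
      unfolding pair_coord_def \<delta>_def by algebra
  next
    case 2
    then have "pair_coord i j (s3' *v w) = xc i w + xc j w - xc 7 w + \<delta>"
      using block \<open>i \<le> 7\<close> \<open>j \<le> 7\<close>
      by (simp add: pair_coord_def xc_s3'_mult[OF w] \<delta>_def Kset_def)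
    then show ?thesis
      using four[unfolded \<open>p = 1\<close>] sum1 unfolding pair_coord_def \<delta>_def by algebra
  qed
qed

lemma pair_coord_s3'_cross_blocks:
  assumes "w \<in> Wset" "i \<le> 7" "j \<le> 7" "(i \<in> Kset 1) \<noteq> (j \<in> Kset 1)"
  shows "pair_coord i j (s3' *v w) = pair_coord i j w"
  using assms by (auto simp: pair_coord_def xc_s3'_mult Kset_def)

lemma act_s3'_vc_same_block:
  assumes "p \<in> {0, 1}" "{i, j, k, l} = Kset p"
  shows "act s3' (vc sg i j) = vc (\<not> sg) k l"
  by (rule act_vc_eqI[OF coset_involution_s3'])
    (use assms in \<open>simp add: signed_pair_coord_def pair_coord_s3'_same_block\<close>)

lemma act_s3'_vc_cross_blocks:
  assumes "i \<le> 7" "j \<le> 7" "(i \<in> Kset 1) \<noteq> (j \<in> Kset 1)"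
  shows "act s3' (vc sg i j) = vc sg i j"
  by (rule act_vc_eqI[OF coset_involution_s3'])
    (use assms in \<open>simp add: signed_pair_coord_def pair_coord_s3'_cross_blocks\<close>)

theorem proposition3p3:
  shows "(\<forall>k \<le> 5. \<forall>i j sg. i < j \<and> j \<le> 7 \<longrightarrow>
            act (sgen (6 - k)) (vc sg i j) = vc sg (rho k i) (rho k j))
       \<and> (\<forall>i j sg. i < j \<and> j \<le> 7 \<longrightarrow>
            (\<forall>p k l. p \<in> {0, 1} \<and> {i, j, k, l} = Kset p \<longrightarrow>
               act s3' (vc sg i j) = vc (\<not> sg) k l)
          \<and> (\<not> (\<exists>p k l. p \<in> {0, 1} \<and> {i, j, k, l} = Kset p) \<longrightarrow>
               act s3' (vc sg i j) = vc sg i j))"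
proof (intro conjI allI impI)
  fix k i j :: nat and sg
  assume "k \<le> 5" "i < j \<and> j \<le> 7"
  then show "act (sgen (6 - k)) (vc sg i j) = vc sg (rho k i) (rho k j)"
    by (intro act_sgen_vc) auto
next
  fix i j p k l :: nat and sg
  assume "p \<in> {0, 1} \<and> {i, j, k, l} = Kset p"
  then show "act s3' (vc sg i j) = vc (\<not> sg) k l"
    using act_s3'_vc_same_block by blast
next
  fix i j :: nat and sg
  assume ij: "i < j \<and> j \<le> 7" and no_block: "\<not> (\<exists>p k l. p \<in> {0, 1} \<and> {i, j, k, l} = Kset p)"
  have "(i \<in> Kset 1) \<noteq> (j \<in> Kset 1)"
  proof
    assume "(i \<in> Kset 1) = (j \<in> Kset 1)"
    then obtain p where p: "p \<in> {0, 1}" and "i \<in> Kset p" "j \<in> Kset p"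
      using ij Kset_0_iff[of i] Kset_0_iff[of j] by (cases "i \<in> Kset 1") auto
    then obtain k l where "{i, j, k, l} = Kset p"
      using card_pair_completion[OF card_Kset[OF p]] ij by blast
    then show False
      using no_block p by blast
  qed
  then show "act s3' (vc sg i j) = vc sg i j"
    using ij by (simp add: act_s3'_vc_cross_blocks)
qed

end
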